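(* Let $K_c=\operatorname{conv}\big(\mathbb{S}^{d-1}\cup\{\boldsymbol v_i\mid i\in I\}\big)\subset\mathbb{E}^d$ be a cap body, let $i\in I$, and let $S_i=\operatorname{bd}\operatorname{conv}(\mathbb{S}^{d-1}\cup\{\boldsymbol v_i\})\setminus\mathbb{S}^{d-1}$ be the spike of the vertex $\boldsymbol v_i$. Then a direction $\boldsymbol u\in\mathbb{S}^{d-1}$ illuminates every point of $S_i$ if and only if $\boldsymbol u$ illuminates the vertex $\boldsymbol v_i$.
   Context: $\mathbb{S}^{d-1}$ is the unit sphere centred at the origin and $B^d$ the closed unit ball. A cap body is $\operatorname{conv}(\mathbb{S}^{d-1}\cup\{\boldsymbol v_i\mid i\in I\})$ where $\{\boldsymbol v_i\}$ is a countable subset of $\mathbb{E}^d\setminus B^d$ such that for distinct $i,j$ the segment $\overline{\boldsymbol v_i\boldsymbol v_j}$ intersects $B^d$; the $\boldsymbol v_i$ are its vertices. A direction $\boldsymbol u\in\mathbb{S}^{d-1}$ illuminates a boundary point $\boldsymbol p$ of the convex body $K_c$ if $\boldsymbol p+\lambda\boldsymbol u$ is in the interior of $K_c$ for some $\lambda>0$. *)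

theory Defs
  imports "HOL-Analysis.Analysis"
begin

definition cap_vertices :: "'a::euclidean_space set \<Rightarrow> bool" where
  "cap_vertices V \<longleftrightarrow> countable V \<and> V \<inter> cball 0 1 = {} \<and>
     (\<forall>v\<in>V. \<forall>w\<in>V. v \<noteq> w \<longrightarrow> closed_segment v w \<inter> cball 0 1 \<noteq> {})"

definition cap_body :: "'a::euclidean_space set \<Rightarrow> 'a set" where
  "cap_body V = convex hull (sphere 0 1 \<union> V)"

definition spike :: "'a::euclidean_space \<Rightarrow> 'a set" where
  "spike v = frontier (convex hull (sphere 0 1 \<union> {v})) - sphere 0 1"

definition illuminates :: "'a::euclidean_space set \<Rightarrow> 'a \<Rightarrow> 'a \<Rightarrow> bool" where
  "illuminates K u p \<longleftrightarrow> (\<exists>t>0. p + t *\<^sub>R u \<in> interior K)"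

end

theory Submission
  imports Defs
begin

text \<open>Every point p of the spike of v is a convex combination a v + (1 - a) q with q in the
  unit ball and a > 0. If v + t u is interior to the convex body K, then shrinking the
  segment from q towards v + t u by the factor a keeps it interior, and that point is
  p + a t u. Conversely, v itself lies on the spike.\<close>

lemma convex_hull_sphere [simp]:
  fixes a :: "'a::euclidean_space"
  shows "convex hull (sphere a r) = cball a r"
proof -
  have "cball a r = convex hull (frontier (cball a r))"
    by (rule Krein_Milman_frontier) simp_all
  then show ?thesis
    by simp
qed

lemma cball_subset_cap_body: "cball 0 1 \<subseteq> cap_body V"
proof -
  have "convex hull (sphere 0 1) \<subseteq> convex hull (sphere 0 1 \<union> V)"
    by (rule hull_mono) blast
  then show ?thesis
    by (simp add: cap_body_def)
qed

lemma illuminates_convex_combination: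
  fixes K :: "'a::euclidean_space set"
  assumes "convex K" and "illuminates K u v" and "q \<in> K" and "0 < a" and "a \<le> 1"
  shows "illuminates K u (a *\<^sub>R v + (1 - a) *\<^sub>R q)"
proof -
  obtain t where "t > 0" and vt: "v + t *\<^sub>R u \<in> interior K"
    using assms(2) unfolding illuminates_def by blast
  have "q - a *\<^sub>R (q - (v + t *\<^sub>R u)) \<in> interior K"
    using mem_interior_convex_shrink[OF assms(1) vt assms(3-5)] .
  moreover have "q - a *\<^sub>R (q - (v + t *\<^sub>R u)) = a *\<^sub>R v + (1 - a) *\<^sub>R q + (a * t) *\<^sub>R u"
    by (simp add: algebra_simps)
  moreover have "a * t > 0"
    using \<open>t > 0\<close> \<open>a > 0\<close> by simp
  ultimately show ?thesis
    unfolding illuminates_def by auto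
qed

lemma spike_convex_combinationE:
  fixes v p :: "'a::euclidean_space"
  assumes "p \<in> spike v"
  obtains a q where "0 < a" "a \<le> 1" "q \<in> cball 0 1" "p = a *\<^sub>R v + (1 - a) *\<^sub>R q"
proof -
  define C where "C = convex hull (insert v (sphere (0::'a) 1))"
  have pC: "p \<in> frontier C" "p \<notin> sphere 0 1"
    using assms unfolding spike_def C_def by auto
  have "closed C"
    unfolding C_def by (simp add: compact_imp_closed compact_convex_hull)
  then have "p \<in> C"
    using pC(1) by (simp add: frontier_def)
  then obtain u q where u: "0 \<le> u" "u \<le> 1" "q \<in> cball 0 1" "p = (1 - u) *\<^sub>R v + u *\<^sub>R q"
    unfolding C_def convex_hull_insert_alt by auto
  have "convex hull (sphere 0 1) \<subseteq> C"
    unfolding C_def by (rule hull_mono) blast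
  then have "ball 0 1 \<subseteq> interior C"
    using interior_mono[of "cball 0 1" C] by simp
  then have "p \<notin> ball 0 1"
    using pC(1) by (auto simp: frontier_def)
  with pC(2) have "p \<notin> cball 0 1"
    by auto
  then have "u < 1"
    using u by (cases "u = 1") auto
  then show ?thesis
    using that[of "1 - u" q] u by auto
qed

lemma vertex_in_spike:
  fixes v :: "'a::euclidean_space"
  assumes "1 < norm v"
  shows "v \<in> spike v"
proof -
  define C where "C = convex hull (insert v (sphere (0::'a) 1))"
  have "C \<subseteq> cball 0 (norm v)"
    unfolding C_def using assms by (intro hull_minimal) auto
  then have "interior C \<subseteq> ball 0 (norm v)"
    using interior_mono[of C "cball 0 (norm v)"] by simp
  then have "v \<notin> interior C"
    by auto
  moreover have "v \<in> C"
    unfolding C_def by (simp add: hull_inc)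
  ultimately have "v \<in> frontier C"
    using closure_subset by (auto simp: frontier_def)
  then show ?thesis
    unfolding spike_def C_def using assms by simp
qed

theorem lemma3:
  fixes V :: "'a::euclidean_space set" and v u :: 'a
  assumes "cap_vertices V"
    and "v \<in> V"
    and "u \<in> sphere 0 1"
  shows "(\<forall>p\<in>spike v. illuminates (cap_body V) u p) \<longleftrightarrow> illuminates (cap_body V) u v"
proof
  have "1 < norm v"
    using assms(1,2) unfolding cap_vertices_def by auto
  then show "illuminates (cap_body V) u v" if "\<forall>p\<in>spike v. illuminates (cap_body V) u p"
    using that vertex_in_spike by blast
next
  assume v: "illuminates (cap_body V) u v"
  show "\<forall>p\<in>spike v. illuminates (cap_body V) u p"
  proof
    fix p assume "p \<in> spike v"
    then obtain a q where "0 < a" "a \<le> 1" "q \<in> cball 0 1" "p = a *\<^sub>R v + (1 - a) *\<^sub>R q"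
      by (rule spike_convex_combinationE)
    moreover have "convex (cap_body V)"
      by (simp add: cap_body_def)
    ultimately show "illuminates (cap_body V) u p"
      using illuminates_convex_combination[OF _ v] cball_subset_cap_body by blast
  qed
qed

end
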